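(* Let $G_m$ be a parametric regulatory network with a well-formed set of influence constraints $R$, and let $\pi$ be a finite sequence of transitions in $\Delta(G_m)$, with $\tilde\pi$ the set of its transitions. Then $p^\#_R(\tilde\pi)\neq\varnothing$ if and only if $p_R(\tilde\pi)\neq\emptyset$.
   Context: An influence graph is $G=(V,I)$ with $V=\{1,\dots,n\}$, $I\subseteq V\times V$; regulators $n^-(v)=\{u\mid(u,v)\in I\}$. $m\in\mathbb N^n$, $D_v=\{0,\dots,m_v\}$, PRN $G_m=(G,m)$. Regulator states $\Omega_v=\prod_{u\in n^-(v)}D_u$; $\omega[u\leftarrow k]$ replaces component $u$ of $\omega$ by $k$. Parametrisations: $P\in\mathbb P(G_m)=\prod_{\langle v,\omega\rangle,\ \omega\in\Omega_v}D_v$, coordinates $P_{v,\omega}$, componentwise order, $\bot$ the zero vector, $\top_{v,\omega}=m_v$; $(L,U)$ denotes $\{P\mid L\le P\le U\}$, the empty lattice $\varnothing$ if $L\not\le U$. States $\prod_vD_v$; $\omega_v(x)$ projects $x$ onto the regulators of $v$. Transitions $x\xrightarrow{v,+}y$ ($y=x$ except $y_v=x_v+1\le m_v$) and $x\xrightarrow{v,-}y$ ($y_v=x_v-1\ge0$). $\mathcal P_{x\xrightarrow{v,+}y}=\{P\mid P_{v,\omega_v(x)}\ge x_v+1\}$, $\mathcal P_{x\xrightarrow{v,-}y}=\{P\mid P_{v,\omega_v(x)}\le x_v-1\}$; $p(\emptyset)=\mathbb P(G_m)$, $p(T)=\bigcap_{t\in T}\mathcal P_t$. $R\subseteq V\times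 V\times\{+1,-1,\mathrm o\}$ is well-formed if $u\in n^-(v)$ for all $(u,v,c)\in R$ and never both $(u,v,+1),(u,v,-1)\in R$. $\mathcal P_{(u,v,+1)}=\{P\mid\forall\omega\in\Omega_v\forall x_u\in\{1..m_u\}:P_{v,\omega[u\leftarrow x_u]}\ge P_{v,\omega[u\leftarrow x_u-1]}\}$, $\mathcal P_{(u,v,-1)}$ likewise with $\le$, $\mathcal P_{(u,v,\mathrm o)}=\{P\mid\exists\omega\in\Omega_v\exists x_u\in\{1..m_u\}:P_{v,\omega[u\leftarrow x_u]}\ne P_{v,\omega[u\leftarrow x_u-1]}\}$; $p_R(T)=p(T)\cap\bigcap_{r\in R}\mathcal P_r$. Order $\preceq_v$ on $\Omega_v$: $\omega\preceq_v\omega'$ iff for all $u\in n^-(v)$, $\omega_u\le\omega'_u$ if $(u,v,+1)\in R$, $\omega_u\ge\omega'_u$ if $(u,v,-1)\in R$, $\omega_u=\omega'_u$ otherwise; $\parallel_v$ means incomparable. Narrowings (mapping $\varnothing$ to $\varnothing$): $\nabla_{x\xrightarrow{v,+}y}(L,U)=(\max(L,\bot[(v,\omega_v(x))\leftarrow x_v+1]),U)$, $\nabla_{x\xrightarrow{v,-}y}(L,U)=(L,\min(U,\top[(v,\omega_v(x))\leftarrow x_v-1]))$. For $s=\pm1$, $\nabla_{(u,v,s)}(L,U)$ is the fixpoint of iterating $f(L,U)=(L',U')$ with $L'_{v,\omega}=\max(\{L_{v,\omega}\}\cup\{L_{v,\omega[u\leftarrow\omega_u-s]}\mid\omega_u-s\in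 D_u\})$, $U'_{v,\omega}=\min(\{U_{v,\omega}\}\cup\{U_{v,\omega[u\leftarrow\omega_u+s]}\mid\omega_u+s\in D_u\})$, other coordinates unchanged. $A=A_{u,v}(L,U)=\{\omega\in\Omega_v\mid\exists x_u\in\{1..m_u\}: L_{v,\omega[u\leftarrow x_u]}<U_{v,\omega[u\leftarrow x_u-1]}\vee U_{v,\omega[u\leftarrow x_u]}>L_{v,\omega[u\leftarrow x_u-1]}\}$; $\nabla_{(u,v,\mathrm o)}(L,U)=\varnothing$ if $A=\emptyset$, else $(L',U')$ with $L'=L$ plus 1 at $(v,\omega)$ if $\overline B=\{\omega\}$ (else $L'=L$), $U'=U$ minus 1 at $(v,\omega)$ if $\underline B=\{\omega\}$ (else $U'=U$), where $\overline B=\{\omega\in A\mid L_{v,\omega}<U_{v,\omega}\wedge\forall\omega'\in A:L_{v,\omega}=L_{v,\omega'}\wedge(\omega'\preceq_v\omega\vee\omega\parallel_v\omega')\}$, $\underline B=\{\omega\in A\mid L_{v,\omega}<U_{v,\omega}\wedge\forall\omega'\in A:U_{v,\omega}=U_{v,\omega'}\wedge(\omega\preceq_v\omega'\vee\omega\parallel_v\omega')\}$. $\nabla_{R'}$ is the fixpoint of iterating the composition of $\nabla_r$, $r\in R'$. $p^\#_R(\emptyset)=\nabla_R(\bot,\top)$, $p^\#_R(T\cup\{t\})=\nabla_{\{(u,v',c)\in R\mid v'=v\}}(\nabla_t(p^\#_R(T)))$ where $v$ is the node changed by $t$. *)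

theory Defs
  imports Main
begin

(* Vertices are the natural numbers 1..n; influence graph I \<subseteq> V \<times> V; m v = maximal level of v. *)

datatype sgn = SPlus | SMinus | SObs
datatype dir = Inc | Dec

type_synonym state = "nat \<Rightarrow> nat"
type_synonym param = "nat \<Rightarrow> (nat \<Rightarrow> nat) \<Rightarrow> nat"
(* transition x --(v,Inc)--> y  or  x --(v,Dec)--> y, represented by (x, v, direction) *)
type_synonym trans = "state \<times> nat \<times> dir"
type_synonym constr = "nat \<times> nat \<times> sgn"
(* None = the empty lattice; Some (L,U) with L \<le> U *)
type_synonym lat = "(param \<times> param) option"

definition regs :: "(nat \<times> nat) set \<Rightarrow> nat \<Rightarrow> nat set" where
  "regs I v = {u. (u, v) \<in> I}"

definition Omega :: "(nat \<times> nat) set \<Rightarrow> (nat \<Rightarrow> nat) \<Rightarrow> nat \<Rightarrow> (nat \<Rightarrow> nat) set" where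
  "Omega I m v = {\<omega>. (\<forall>u\<in>regs I v. \<omega> u \<le> m u) \<and> (\<forall>u. u \<notin> regs I v \<longrightarrow> \<omega> u = 0)}"

definition is_coord :: "nat \<Rightarrow> (nat \<times> nat) set \<Rightarrow> (nat \<Rightarrow> nat) \<Rightarrow> nat \<Rightarrow> (nat \<Rightarrow> nat) \<Rightarrow> bool" where
  "is_coord n I m v \<omega> \<longleftrightarrow> v \<in> {1..n} \<and> \<omega> \<in> Omega I m v"

definition params :: "nat \<Rightarrow> (nat \<times> nat) set \<Rightarrow> (nat \<Rightarrow> nat) \<Rightarrow> param set" where
  "params n I m = {P. \<forall>v \<omega>. (is_coord n I m v \<omega> \<longrightarrow> P v \<omega> \<le> m v)
                              \<and> (\<not> is_coord n I m v \<omega> \<longrightarrow> P v \<omega> = 0)}"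

definition pbot :: param where
  "pbot = (\<lambda>v \<omega>. 0)"

definition ptop :: "nat \<Rightarrow> (nat \<times> nat) set \<Rightarrow> (nat \<Rightarrow> nat) \<Rightarrow> param" where
  "ptop n I m = (\<lambda>v \<omega>. if is_coord n I m v \<omega> then m v else 0)"

definition states :: "nat \<Rightarrow> (nat \<Rightarrow> nat) \<Rightarrow> state set" where
  "states n m = {x. (\<forall>v\<in>{1..n}. x v \<le> m v) \<and> (\<forall>v. v \<notin> {1..n} \<longrightarrow> x v = 0)}"

definition omega_of :: "(nat \<times> nat) set \<Rightarrow> nat \<Rightarrow> state \<Rightarrow> (nat \<Rightarrow> nat)" where
  "omega_of I v x = (\<lambda>u. if u \<in> regs I v then x u else 0)"

definition is_trans :: "nat \<Rightarrow> (nat \<Rightarrow> nat) \<Rightarrow> trans \<Rightarrow> bool" where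
  "is_trans n m t = (case t of (x, v, d) \<Rightarrow> x \<in> states n m \<and> v \<in> {1..n} \<and>
       (case d of Inc \<Rightarrow> x v + 1 \<le> m v | Dec \<Rightarrow> 1 \<le> x v))"

definition tnode :: "trans \<Rightarrow> nat" where
  "tnode t = fst (snd t)"

definition Ptrans :: "nat \<Rightarrow> (nat \<times> nat) set \<Rightarrow> (nat \<Rightarrow> nat) \<Rightarrow> trans \<Rightarrow> param set" where
  "Ptrans n I m t = (case t of
      (x, v, Inc) \<Rightarrow> {P \<in> params n I m. P v (omega_of I v x) \<ge> x v + 1}
    | (x, v, Dec) \<Rightarrow> {P \<in> params n I m. P v (omega_of I v x) \<le> x v - 1})"

definition pT :: "nat \<Rightarrow> (nat \<times> nat) set \<Rightarrow> (nat \<Rightarrow> nat) \<Rightarrow> trans set \<Rightarrow> param set" where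
  "pT n I m T = params n I m \<inter> (\<Inter>t\<in>T. Ptrans n I m t)"

definition wellformed :: "(nat \<times> nat) set \<Rightarrow> constr list \<Rightarrow> bool" where
  "wellformed I R \<longleftrightarrow> (\<forall>(u, v, c) \<in> set R. u \<in> regs I v)
     \<and> \<not> (\<exists>u v. (u, v, SPlus) \<in> set R \<and> (u, v, SMinus) \<in> set R)"

definition Pconstr :: "nat \<Rightarrow> (nat \<times> nat) set \<Rightarrow> (nat \<Rightarrow> nat) \<Rightarrow> constr \<Rightarrow> param set" where
  "Pconstr n I m r = (case r of
      (u, v, SPlus) \<Rightarrow> {P \<in> params n I m. \<forall>\<omega>\<in>Omega I m v. \<forall>k\<in>{1..m u}.
                           P v (\<omega>(u := k)) \<ge> P v (\<omega>(u := k - 1))}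
    | (u, v, SMinus) \<Rightarrow> {P \<in> params n I m. \<forall>\<omega>\<in>Omega I m v. \<forall>k\<in>{1..m u}.
                           P v (\<omega>(u := k)) \<le> P v (\<omega>(u := k - 1))}
    | (u, v, SObs) \<Rightarrow> {P \<in> params n I m. \<exists>\<omega>\<in>Omega I m v. \<exists>k\<in>{1..m u}.
                           P v (\<omega>(u := k)) \<noteq> P v (\<omega>(u := k - 1))})"

definition pR :: "nat \<Rightarrow> (nat \<times> nat) set \<Rightarrow> (nat \<Rightarrow> nat) \<Rightarrow> constr list \<Rightarrow> trans set \<Rightarrow> param set" where
  "pR n I m R T = pT n I m T \<inter> (\<Inter>r\<in>set R. Pconstr n I m r)"

definition prec :: "(nat \<times> nat) set \<Rightarrow> constr list \<Rightarrow> nat \<Rightarrow> (nat \<Rightarrow> nat) \<Rightarrow> (nat \<Rightarrow> nat) \<Rightarrow> bool" where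
  "prec I R v \<omega> \<omega>' \<longleftrightarrow> (\<forall>u\<in>regs I v.
      (if (u, v, SPlus) \<in> set R then \<omega> u \<le> \<omega>' u
       else if (u, v, SMinus) \<in> set R then \<omega> u \<ge> \<omega>' u
       else \<omega> u = \<omega>' u))"

definition incomp :: "(nat \<times> nat) set \<Rightarrow> constr list \<Rightarrow> nat \<Rightarrow> (nat \<Rightarrow> nat) \<Rightarrow> (nat \<Rightarrow> nat) \<Rightarrow> bool" where
  "incomp I R v \<omega> \<omega>' \<longleftrightarrow> \<not> prec I R v \<omega> \<omega>' \<and> \<not> prec I R v \<omega>' \<omega>"

definition mk :: "param \<Rightarrow> param \<Rightarrow> lat" where
  "mk L U = (if L \<le> U then Some (L, U) else None)"

definition fixp :: "('a \<Rightarrow> 'a) \<Rightarrow> 'a \<Rightarrow> 'a" where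
  "fixp f x = (f ^^ (LEAST k. f ((f ^^ k) x) = (f ^^ k) x)) x"

definition nabla_t :: "nat \<Rightarrow> (nat \<times> nat) set \<Rightarrow> (nat \<Rightarrow> nat) \<Rightarrow> trans \<Rightarrow> lat \<Rightarrow> lat" where
  "nabla_t n I m t lt = (case lt of None \<Rightarrow> None | Some (L, U) \<Rightarrow>
     (case t of
        (x, v, Inc) \<Rightarrow> mk (sup L (pbot(v := (pbot v)(omega_of I v x := x v + 1)))) U
      | (x, v, Dec) \<Rightarrow> mk L (inf U ((ptop n I m)(v := (ptop n I m v)(omega_of I v x := x v - 1))))))"

definition shift :: "sgn \<Rightarrow> int" where
  "shift s = (case s of SPlus \<Rightarrow> 1 | SMinus \<Rightarrow> -1 | SObs \<Rightarrow> 0)"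

definition infl_step :: "nat \<Rightarrow> (nat \<times> nat) set \<Rightarrow> (nat \<Rightarrow> nat) \<Rightarrow> nat \<Rightarrow> nat \<Rightarrow> sgn \<Rightarrow> lat \<Rightarrow> lat" where
  "infl_step n I m u v s lt = (case lt of None \<Rightarrow> None | Some (L, U) \<Rightarrow>
     mk (\<lambda>v' \<omega>. if v' = v \<and> is_coord n I m v \<omega> then
            Max ({L v \<omega>} \<union>
                 (if 0 \<le> int (\<omega> u) - shift s \<and> int (\<omega> u) - shift s \<le> int (m u)
                  then {L v (\<omega>(u := nat (int (\<omega> u) - shift s)))} else {}))
          else L v' \<omega>)
        (\<lambda>v' \<omega>. if v' = v \<and> is_coord n I m v \<omega> then
            Min ({U v \<omega>} \<union>
                 (if 0 \<le> int (\<omega> u) + shift s \<and> int (\<omega> u) + shift s \<le> int (m u)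
                  then {U v (\<omega>(u := nat (int (\<omega> u) + shift s)))} else {}))
          else U v' \<omega>))"

definition nabla_obs :: "nat \<Rightarrow> (nat \<times> nat) set \<Rightarrow> (nat \<Rightarrow> nat) \<Rightarrow> constr list \<Rightarrow> nat \<Rightarrow> nat \<Rightarrow> lat \<Rightarrow> lat" where
  "nabla_obs n I m R u v lt = (case lt of None \<Rightarrow> None | Some (L, U) \<Rightarrow>
     (let A = {\<omega> \<in> Omega I m v. \<exists>k\<in>{1..m u}.
                 L v (\<omega>(u := k)) < U v (\<omega>(u := k - 1)) \<or> U v (\<omega>(u := k)) > L v (\<omega>(u := k - 1))};
          Bo = {\<omega> \<in> A. L v \<omega> < U v \<omega> \<and>
                 (\<forall>\<omega>'\<in>A. L v \<omega> = L v \<omega>' \<and> (prec I R v \<omega>' \<omega> \<or> incomp I R v \<omega> \<omega>'))};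
          Bu = {\<omega> \<in> A. L v \<omega> < U v \<omega> \<and>
                 (\<forall>\<omega>'\<in>A. U v \<omega> = U v \<omega>' \<and> (prec I R v \<omega> \<omega>' \<or> incomp I R v \<omega> \<omega>'))};
          L' = (if \<exists>\<omega>. Bo = {\<omega>} then L(v := (L v)(the_elem Bo := L v (the_elem Bo) + 1)) else L);
          U' = (if \<exists>\<omega>. Bu = {\<omega>} then U(v := (U v)(the_elem Bu := U v (the_elem Bu) - 1)) else U)
      in if A = {} then None else mk L' U'))"

definition nabla_r :: "nat \<Rightarrow> (nat \<times> nat) set \<Rightarrow> (nat \<Rightarrow> nat) \<Rightarrow> constr list \<Rightarrow> constr \<Rightarrow> lat \<Rightarrow> lat" where
  "nabla_r n I m R r = (case r of
      (u, v, SObs) \<Rightarrow> nabla_obs n I m R u v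
    | (u, v, s) \<Rightarrow> fixp (infl_step n I m u v s))"

definition nabla_set :: "nat \<Rightarrow> (nat \<times> nat) set \<Rightarrow> (nat \<Rightarrow> nat) \<Rightarrow> constr list \<Rightarrow> constr list \<Rightarrow> lat \<Rightarrow> lat" where
  "nabla_set n I m R R' = fixp (fold (\<lambda>r f. nabla_r n I m R r \<circ> f) R' id)"

definition psharp :: "nat \<Rightarrow> (nat \<times> nat) set \<Rightarrow> (nat \<Rightarrow> nat) \<Rightarrow> constr list \<Rightarrow> trans list \<Rightarrow> lat" where
  "psharp n I m R \<pi> = fold (\<lambda>t lt. nabla_set n I m R (filter (\<lambda>(u, v', c). v' = tnode t) R) (nabla_t n I m t lt))
        (remdups \<pi>) (nabla_set n I m R R (Some (pbot, ptop n I m)))"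

end

theory Submission
  imports Defs
begin

text \<open>Soundness: every narrowing operator keeps each parametrisation of \<open>p\<^sub>R(\<pi>)\<close> that
  lies in its input box, so the final box still contains it. Completeness: the final box
  \<open>(L, U)\<close> is reached through fixpoints of the constraint narrowings, so its bounds enforce every
  transition of \<open>\<pi>\<close>, are monotone along every sign constraint and leave room to vary along every
  observability constraint. Such a box contains an admissible parametrisation: take \<open>L\<close> and, at
  each node where \<open>L\<close> is flat along an observed regulator, raise it to \<open>U\<close> at a slack regulator
  state of maximal potential. All iterations terminate because the width of a box strictly
  decreases under every proper narrowing step.\<close>

lemma fixp_funpow: "\<exists>k. fixp f x = (f ^^ k) x"
  by (auto simp: fixp_def)

lemma le_funD2: "(F :: 'a \<Rightarrow> 'b \<Rightarrow> 'c :: order) \<le> G \<Longrightarrow> F a b \<le> G a b"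
  by (simp add: le_fun_def)

lemma le_fun2I: "(\<And>a b. F a b \<le> G a b) \<Longrightarrow> (F :: 'a \<Rightarrow> 'b \<Rightarrow> 'c :: order) \<le> G"
  by (simp add: le_fun_def)

lemma finite_exists_maximal_above:
  fixes f :: "'a \<Rightarrow> int"
  assumes "finite A" "d \<in> A" "r d d" "\<And>a b c. r a b \<Longrightarrow> r b c \<Longrightarrow> r a c"
    and "\<And>a b. a \<in> A \<Longrightarrow> b \<in> A \<Longrightarrow> r a b \<Longrightarrow> f a \<le> f b"
    and "\<And>a b. a \<in> A \<Longrightarrow> b \<in> A \<Longrightarrow> r a b \<Longrightarrow> f a = f b \<Longrightarrow> a = b"
  obtains w where "w \<in> A" "r d w" "\<And>a. a \<in> A \<Longrightarrow> r w a \<Longrightarrow> a = w"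
proof -
  let ?D = "{a \<in> A. r d a}"
  have "finite ?D" "d \<in> ?D" using assms(1-3) by auto
  then have "Max (f ` ?D) \<in> f ` ?D" by (intro Max_in) auto
  then obtain w where w: "w \<in> ?D" "Max (f ` ?D) = f w" by blast
  have maximal: "a = w" if "a \<in> A" "r w a" for a
  proof -
    have "a \<in> ?D" using that w(1) assms(4)[of d w a] by simp
    then have "f a \<le> f w" unfolding w(2)[symmetric] using \<open>finite ?D\<close> by simp
    with assms(5)[of w a] that w(1) have "f w = f a" by simp
    with assms(6)[of w a] that w(1) show "a = w" by simp
  qed
  show ?thesis by (rule that[of w]) (use w(1) maximal in auto)
qed

locale regulatory_network =
  fixes n :: nat and I :: "(nat \<times> nat) set" and m :: "nat \<Rightarrow> nat" and R :: "constr list"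
  assumes graph_on_nodes: "I \<subseteq> {1..n} \<times> {1..n}" and wf_R: "wellformed I R"
begin

section \<open>Narrowing operators and their fixpoints\<close>

definition wf_lat :: "lat \<Rightarrow> bool" where
  "wf_lat x = (case x of None \<Rightarrow> True | Some (L, U) \<Rightarrow> L \<le> U \<and> U \<le> ptop n I m)"

definition lat_le :: "lat \<Rightarrow> lat \<Rightarrow> bool" where
  "lat_le a b = (case (a, b) of (None, _) \<Rightarrow> True | (Some _, None) \<Rightarrow> False
      | (Some (L', U'), Some (L, U)) \<Rightarrow> L \<le> L' \<and> U' \<le> U)"

definition narrowing :: "(lat \<Rightarrow> lat) \<Rightarrow> bool" where
  "narrowing g \<longleftrightarrow> g None = None \<and> (\<forall>x. wf_lat x \<longrightarrow> wf_lat (g x) \<and> lat_le (g x) x)"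

definition agree_off :: "nat \<Rightarrow> lat \<Rightarrow> lat \<Rightarrow> bool" where
  "agree_off v a b \<longleftrightarrow> (\<forall>L' U' L U. a = Some (L', U') \<longrightarrow> b = Some (L, U) \<longrightarrow>
      (\<forall>w. w \<noteq> v \<longrightarrow> L' w = L w \<and> U' w = U w))"

definition local_to :: "nat \<Rightarrow> (lat \<Rightarrow> lat) \<Rightarrow> bool" where
  "local_to v g \<longleftrightarrow> (\<forall>x. wf_lat x \<longrightarrow> agree_off v (g x) x)"

definition lat_mem :: "param \<Rightarrow> lat \<Rightarrow> bool" where
  "lat_mem P x \<longleftrightarrow> (\<exists>L U. x = Some (L, U) \<and> L \<le> P \<and> P \<le> U)"

definition keeps :: "param \<Rightarrow> (lat \<Rightarrow> lat) \<Rightarrow> bool" where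
  "keeps P g \<longleftrightarrow> (\<forall>x. lat_mem P x \<longrightarrow> lat_mem P (g x))"

lemma lat_le_refl: "lat_le x x"
  by (auto simp: lat_le_def split: option.splits)

lemma lat_le_trans: "lat_le a b \<Longrightarrow> lat_le b c \<Longrightarrow> lat_le a c"
  by (auto simp: lat_le_def split: option.splits intro: order_trans)

lemma lat_le_antisym: "lat_le a b \<Longrightarrow> lat_le b a \<Longrightarrow> a = b"
  by (auto simp: lat_le_def split: option.splits intro: order_antisym)

lemma lat_le_SomeE:
  assumes "lat_le (Some (L', U')) x"
  obtains L U where "x = Some (L, U)" "L \<le> L'" "U' \<le> U"
  using assms by (cases x) (auto simp: lat_le_def)

lemma narrowing_id: "narrowing id"
  by (simp add: narrowing_def lat_le_refl)

lemma narrowing_comp: "narrowing g \<Longrightarrow> narrowing h \<Longrightarrow> narrowing (g \<circ> h)"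
  unfolding narrowing_def by (auto intro: lat_le_trans)

lemma narrowing_funpow: "narrowing g \<Longrightarrow> narrowing (g ^^ k)"
  by (induction k) (auto simp: narrowing_id narrowing_comp)

lemma narrowing_fixp: "narrowing g \<Longrightarrow> narrowing (fixp g)"
  using narrowing_funpow fixp_funpow unfolding narrowing_def by metis

lemma narrowingD:
  "narrowing g \<Longrightarrow> wf_lat x \<Longrightarrow> wf_lat (g x)"
  "narrowing g \<Longrightarrow> wf_lat x \<Longrightarrow> lat_le (g x) x"
  by (simp_all add: narrowing_def)

lemma narrowingI:
  assumes "g None = None"
    and "\<And>L U. L \<le> U \<Longrightarrow> U \<le> ptop n I m \<Longrightarrow>
           g (Some (L, U)) = None \<or> (\<exists>L' U'. g (Some (L, U)) = Some (L', U') \<and> L' \<le> U' \<and> L \<le> L' \<and> U' \<le> U)"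
  shows "narrowing g"
  unfolding narrowing_def
proof (intro conjI allI impI)
  fix x assume "wf_lat x"
  with assms show "wf_lat (g x)" "lat_le (g x) x"
    by (cases x; fastforce simp: wf_lat_def lat_le_def intro: order_trans)+
qed (fact assms(1))

lemma narrowing_mkI:
  assumes "g None = None" and "\<And>L U. g (Some (L, U)) = mk (L' L U) (U' L U)"
    and "\<And>L U. L \<le> L' L U" and "\<And>L U. U' L U \<le> U"
  shows "narrowing g"
  using assms by (intro narrowingI) (auto simp: mk_def)

lemma local_toI:
  assumes "\<And>L U L' U' w. U \<le> ptop n I m \<Longrightarrow> g (Some (L, U)) = Some (L', U') \<Longrightarrow> w \<noteq> v \<Longrightarrow>
      L' w = L w \<and> U' w = U w"
  shows "local_to v g"
  using assms by (auto simp: local_to_def agree_off_def wf_lat_def)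

lemma local_to_comp:
  assumes "narrowing h" "narrowing g" "local_to v g" "local_to v h"
  shows "local_to v (g \<circ> h)"
  unfolding local_to_def agree_off_def
proof (intro allI impI)
  fix x L' U' L U w
  assume x: "wf_lat x" and gh: "(g \<circ> h) x = Some (L', U')" and xs: "x = Some (L, U)" and w: "w \<noteq> v"
  have "wf_lat (h x)" using assms(1) x by (rule narrowingD)
  moreover have "g None = None" using assms(2) by (simp add: narrowing_def)
  ultimately obtain L1 U1 where h: "h x = Some (L1, U1)" and "wf_lat (Some (L1, U1))"
    using gh by (cases "h x") auto
  then show "L' w = L w \<and> U' w = U w"
    using assms(3,4) x gh xs w by (simp add: local_to_def agree_off_def)
qed

lemma local_to_id: "local_to v id"
  by (simp add: local_to_def agree_off_def)

lemma local_to_funpow: "narrowing g \<Longrightarrow> local_to v g \<Longrightarrow> local_to v (g ^^ k)"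
proof (induction k)
  case 0 then show ?case using local_to_id by (simp add: id_def)
next
  case (Suc k)
  then show ?case
    using local_to_comp[OF narrowing_funpow[OF Suc.prems(1)] Suc.prems(1)] by (simp only: funpow.simps(2))
qed

lemma local_to_fixp: "narrowing g \<Longrightarrow> local_to v g \<Longrightarrow> local_to v (fixp g)"
  using local_to_funpow fixp_funpow unfolding local_to_def by metis

lemma keepsI:
  assumes "\<And>L U. L \<le> P \<Longrightarrow> P \<le> U \<Longrightarrow> lat_mem P (g (Some (L, U)))"
  shows "keeps P g"
  using assms by (auto simp: keeps_def lat_mem_def)

lemma keeps_comp: "keeps P g \<Longrightarrow> keeps P h \<Longrightarrow> keeps P (g \<circ> h)"
  by (simp add: keeps_def)

lemma keeps_funpow: "keeps P g \<Longrightarrow> keeps P (g ^^ k)"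
  by (induction k) (auto simp: keeps_def)

lemma keeps_fixp: "keeps P g \<Longrightarrow> keeps P (fixp g)"
  using keeps_funpow fixp_funpow unfolding keeps_def by metis

lemma lat_mem_mk: "L \<le> P \<Longrightarrow> P \<le> U \<Longrightarrow> lat_mem P (mk L U)"
  by (auto simp: lat_mem_def mk_def intro: order_trans)

lemma regs_subset_nodes: "regs I v \<subseteq> {1..n}"
  using graph_on_nodes by (auto simp: regs_def)

lemma node_of_regulator: "u \<in> regs I v \<Longrightarrow> v \<in> {1..n}"
  using graph_on_nodes by (auto simp: regs_def)

lemma finite_regs: "finite (regs I v)"
  using regs_subset_nodes finite_subset by blast

lemma finite_Omega: "finite (Omega I m v)"
proof -
  let ?B = "{0..Max (m ` {1..n})}"
  have "\<omega> u \<in> ?B" if "\<omega> \<in> Omega I m v" "u \<in> {1..n}" for \<omega> u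
  proof (cases "u \<in> regs I v")
    case True
    then have "\<omega> u \<le> m u" using that(1) by (simp add: Omega_def)
    also have "\<dots> \<le> Max (m ` {1..n})" using that(2) by simp
    finally show ?thesis by simp
  qed (use that(1) in \<open>simp add: Omega_def\<close>)
  moreover have "\<omega> u = 0" if "\<omega> \<in> Omega I m v" "u \<notin> {1..n}" for \<omega> u
    using that regs_subset_nodes[of v] unfolding Omega_def by blast
  ultimately have "Omega I m v \<subseteq> {f. \<forall>x. (x \<in> {1..n} \<longrightarrow> f x \<in> ?B) \<and> (x \<notin> {1..n} \<longrightarrow> f x = 0)}"
    by blast
  moreover have "finite {f. \<forall>x. (x \<in> {1..n} \<longrightarrow> f x \<in> ?B) \<and> (x \<notin> {1..n} \<longrightarrow> f x = (0::nat))}"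
    by (rule finite_set_of_finite_funs) auto
  ultimately show ?thesis using finite_subset by blast
qed

lemma Omega_upd: "\<omega> \<in> Omega I m v \<Longrightarrow> u \<in> regs I v \<Longrightarrow> k \<le> m u \<Longrightarrow> \<omega>(u := k) \<in> Omega I m v"
  by (auto simp: Omega_def)

lemma Omega_le: "\<omega> \<in> Omega I m v \<Longrightarrow> u \<in> regs I v \<Longrightarrow> \<omega> u \<le> m u"
  by (auto simp: Omega_def)

lemma Omega_eqI: "a \<in> Omega I m v \<Longrightarrow> b \<in> Omega I m v \<Longrightarrow> (\<And>u. u \<in> regs I v \<Longrightarrow> a u = b u) \<Longrightarrow> a = b"
  unfolding Omega_def fun_eq_iff by (metis (mono_tags, lifting) mem_Collect_eq)

definition coords :: "(nat \<times> (nat \<Rightarrow> nat)) set" where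
  "coords = Sigma {1..n} (Omega I m)"

lemma finite_coords: "finite coords"
  unfolding coords_def using finite_Omega by auto

lemma is_coord_iff: "is_coord n I m v \<omega> \<longleftrightarrow> (v, \<omega>) \<in> coords"
  by (auto simp: coords_def is_coord_def)

lemma wf_lat_zero_off_coords:
  assumes "wf_lat (Some (L, U))" "(v, \<omega>) \<notin> coords"
  shows "L v \<omega> = 0" "U v \<omega> = 0"
proof -
  have "U v \<omega> \<le> ptop n I m v \<omega>" "L v \<omega> \<le> U v \<omega>"
    using assms(1) by (auto simp: wf_lat_def dest: le_funD2)
  then show "L v \<omega> = 0" "U v \<omega> = 0" using assms(2) by (simp_all add: ptop_def is_coord_iff)
qed

text \<open>The Suc makes the empty lattice strictly narrower than every box.\<close>

definition width :: "lat \<Rightarrow> nat" where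
  "width x = (case x of None \<Rightarrow> 0 | Some (L, U) \<Rightarrow> Suc (\<Sum>(v, \<omega>)\<in>coords. U v \<omega> - L v \<omega>))"

lemma width_less:
  assumes "wf_lat x" "wf_lat y" "lat_le y x" "y \<noteq> x"
  shows "width y < width x"
proof (cases y)
  case None
  then show ?thesis using assms by (cases x) (auto simp: width_def)
next
  case (Some p)
  then obtain L' U' where y: "y = Some (L', U')" by (cases p) auto
  with assms(3) obtain L U where x: "x = Some (L, U)" and le: "L \<le> L'" "U' \<le> U"
    by (auto elim: lat_le_SomeE)
  have LU': "L' \<le> U'" using assms(2) y by (simp add: wf_lat_def)
  let ?d = "\<lambda>L U (v, \<omega>). U v \<omega> - L v \<omega> :: nat"
  have pointwise: "?d L' U' c \<le> ?d L U c" for c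
  proof (cases c)
    case (Pair v \<omega>)
    then show ?thesis using le_funD2[OF le(1), of v \<omega>] le_funD2[OF le(2), of v \<omega>] by simp
  qed
  have "(\<Sum>c\<in>coords. ?d L' U' c) \<noteq> (\<Sum>c\<in>coords. ?d L U c)"
  proof
    assume eq: "(\<Sum>c\<in>coords. ?d L' U' c) = (\<Sum>c\<in>coords. ?d L U c)"
    have "?d L' U' c = ?d L U c" if "c \<in> coords" for c
      using sum_mono_inv[OF eq pointwise that finite_coords] .
    then have "L' v \<omega> = L v \<omega> \<and> U' v \<omega> = U v \<omega>" if "(v, \<omega>) \<in> coords" for v \<omega>
      using that le_funD2[OF le(1), of v \<omega>] le_funD2[OF le(2), of v \<omega>] le_funD2[OF LU', of v \<omega>]
      by fastforce
    moreover have "L' v \<omega> = L v \<omega> \<and> U' v \<omega> = U v \<omega>" if "(v, \<omega>) \<notin> coords" for v \<omega>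
      using wf_lat_zero_off_coords that assms(1,2) x y by metis
    ultimately have "L' = L \<and> U' = U" by (auto simp: fun_eq_iff)
    then show False using assms(4) x y by simp
  qed
  then have "(\<Sum>c\<in>coords. ?d L' U' c) < (\<Sum>c\<in>coords. ?d L U c)"
    using sum_mono[OF pointwise] by (simp add: order_less_le)
  then show ?thesis using x y by (simp add: width_def)
qed

lemma narrowing_iteration_stabilises:
  assumes "narrowing f" "wf_lat x"
  shows "\<exists>k. f ((f ^^ k) x) = (f ^^ k) x"
  using assms(2)
proof (induction "width x" arbitrary: x rule: less_induct)
  case less
  show ?case
  proof (cases "f x = x")
    case True then show ?thesis by (metis funpow_0)
  next
    case False
    have "wf_lat (f x)" "lat_le (f x) x" using narrowingD[OF assms(1) less.prems] by auto
    with False obtain k where "f ((f ^^ k) (f x)) = (f ^^ k) (f x)"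
      using less.hyps width_less less.prems by blast
    then show ?thesis by (metis funpow_Suc_right o_apply)
  qed
qed

lemma fixp_fixed: "narrowing f \<Longrightarrow> wf_lat x \<Longrightarrow> f (fixp f x) = fixp f x"
  unfolding fixp_def by (rule LeastI_ex) (rule narrowing_iteration_stabilises)

lemma params_le_ptop: "P \<in> params n I m \<Longrightarrow> P \<le> ptop n I m"
  by (rule le_fun2I) (auto simp: params_def ptop_def)

lemma le_ptop_params: "P \<le> ptop n I m \<Longrightarrow> P \<in> params n I m"
  by (auto simp: params_def ptop_def dest: le_funD2[of P _ v \<omega> for v \<omega>] split: if_splits)

definition trans_bound :: "trans \<Rightarrow> param \<Rightarrow> param \<Rightarrow> bool" where
  "trans_bound t L U = (case t of
      (x, v, Inc) \<Rightarrow> x v + 1 \<le> L v (omega_of I v x)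
    | (x, v, Dec) \<Rightarrow> U v (omega_of I v x) \<le> x v - 1)"

lemma trans_bound_mono:
  assumes "trans_bound t L U" "L \<le> L'" "U' \<le> U"
  shows "trans_bound t L' U'"
proof -
  obtain x v d where t: "t = (x, v, d)" by (cases t) auto
  show ?thesis
    using assms le_funD2[OF assms(2), of v "omega_of I v x"] le_funD2[OF assms(3), of v "omega_of I v x"]
    by (cases d) (auto simp: t trans_bound_def)
qed

lemma trans_bound_Ptrans:
  assumes "P \<in> params n I m" "trans_bound t L U" "L \<le> P" "P \<le> U"
  shows "P \<in> Ptrans n I m t"
proof -
  obtain x v d where t: "t = (x, v, d)" by (cases t) auto
  show ?thesis
    using assms le_funD2[OF assms(3), of v "omega_of I v x"] le_funD2[OF assms(4), of v "omega_of I v x"]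
    by (cases d) (auto simp: t trans_bound_def Ptrans_def)
qed

lemma nabla_t_Some:
  "nabla_t n I m (x, v, Inc) (Some (L, U)) = mk (sup L (pbot(v := (pbot v)(omega_of I v x := x v + 1)))) U"
  "nabla_t n I m (x, v, Dec) (Some (L, U)) = mk L (inf U ((ptop n I m)(v := (ptop n I m v)(omega_of I v x := x v - 1))))"
  by (simp_all add: nabla_t_def)

lemma narrowing_nabla_t: "narrowing (nabla_t n I m t)"
  by (cases t; cases "snd (snd t)") (auto intro!: narrowing_mkI simp: nabla_t_Some nabla_t_def)

lemma local_nabla_t: "local_to (tnode t) (nabla_t n I m t)"
proof -
  obtain x v d where t: "t = (x, v, d)" by (cases t) auto
  have "L' w = L w \<and> U' w = U w"
    if "U \<le> ptop n I m" "nabla_t n I m t (Some (L, U)) = Some (L', U')" "w \<noteq> v" for L U L' U' w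
    using that le_funD2[OF that(1), of w]
    by (cases d) (auto simp: t nabla_t_Some mk_def fun_eq_iff pbot_def sup_max inf_min split: if_splits)
  then show ?thesis by (intro local_toI) (simp add: t tnode_def)
qed

lemma keeps_nabla_t:
  assumes "P \<in> Ptrans n I m t"
  shows "keeps P (nabla_t n I m t)"
proof (rule keepsI)
  fix L U assume LP: "L \<le> P" and PU: "P \<le> U"
  obtain x v d where t: "t = (x, v, d)" by (cases t) auto
  have Pp: "P \<in> params n I m" using assms by (cases d) (auto simp: t Ptrans_def)
  show "lat_mem P (nabla_t n I m t (Some (L, U)))"
  proof (cases d)
    case Inc
    with assms have "sup L (pbot(v := (pbot v)(omega_of I v x := x v + 1))) \<le> P"
      using LP by (intro le_fun2I) (auto simp: t Ptrans_def pbot_def dest: le_funD2)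
    then show ?thesis using PU by (simp add: t Inc nabla_t_Some lat_mem_mk)
  next
    case Dec
    with assms have "P \<le> inf U ((ptop n I m)(v := (ptop n I m v)(omega_of I v x := x v - 1)))"
      using PU params_le_ptop[OF Pp] by (intro le_fun2I) (auto simp: t Ptrans_def dest: le_funD2)
    then show ?thesis using LP by (simp add: t Dec nabla_t_Some lat_mem_mk)
  qed
qed

lemma trans_bound_nabla_t: "nabla_t n I m t y = Some (L, U) \<Longrightarrow> trans_bound t L U"
  by (cases y; cases t; cases "snd (snd t)")
    (auto simp: nabla_t_def mk_def trans_bound_def split: if_splits)

section \<open>Sign constraints\<close>

definition mono_in :: "sgn \<Rightarrow> nat \<Rightarrow> nat \<Rightarrow> ((nat \<Rightarrow> nat) \<Rightarrow> nat) \<Rightarrow> bool" where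
  "mono_in s u v f \<longleftrightarrow> (\<forall>\<omega>\<in>Omega I m v. \<forall>i j. i \<le> m u \<longrightarrow> j \<le> m u \<longrightarrow> int j = int i + shift s \<longrightarrow>
      f (\<omega>(u := i)) \<le> f (\<omega>(u := j)))"

lemma mono_in_SPlus_iff:
  "mono_in SPlus u v f \<longleftrightarrow> (\<forall>\<omega>\<in>Omega I m v. \<forall>k\<in>{1..m u}. f (\<omega>(u := k - 1)) \<le> f (\<omega>(u := k)))"
  unfolding mono_in_def shift_def sgn.case
proof (intro iffI ballI allI impI)
  fix \<omega> k assume H: "\<forall>\<omega>\<in>Omega I m v. \<forall>i j. i \<le> m u \<longrightarrow> j \<le> m u \<longrightarrow> int j = int i + 1 \<longrightarrow>
      f (\<omega>(u := i)) \<le> f (\<omega>(u := j))" and "\<omega> \<in> Omega I m v" "k \<in> {1..m u}"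
  moreover have "k - 1 \<le> m u" "k \<le> m u" "int k = int (k - 1) + 1" using \<open>k \<in> {1..m u}\<close> by auto
  ultimately show "f (\<omega>(u := k - 1)) \<le> f (\<omega>(u := k))" by blast
next
  fix \<omega> i j assume "\<forall>\<omega>\<in>Omega I m v. \<forall>k\<in>{1..m u}. f (\<omega>(u := k - 1)) \<le> f (\<omega>(u := k))"
    "\<omega> \<in> Omega I m v" "j \<le> m u" "int j = int i + 1"
  moreover have "j \<in> {1..m u}" "j - 1 = i" using calculation(3,4) by auto
  ultimately show "f (\<omega>(u := i)) \<le> f (\<omega>(u := j))" by metis
qed

lemma mono_in_SMinus_iff:
  "mono_in SMinus u v f \<longleftrightarrow> (\<forall>\<omega>\<in>Omega I m v. \<forall>k\<in>{1..m u}. f (\<omega>(u := k)) \<le> f (\<omega>(u := k - 1)))"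
  unfolding mono_in_def shift_def sgn.case
proof (intro iffI ballI allI impI)
  fix \<omega> k assume H: "\<forall>\<omega>\<in>Omega I m v. \<forall>i j. i \<le> m u \<longrightarrow> j \<le> m u \<longrightarrow> int j = int i + - 1 \<longrightarrow>
      f (\<omega>(u := i)) \<le> f (\<omega>(u := j))" and "\<omega> \<in> Omega I m v" "k \<in> {1..m u}"
  moreover have "k - 1 \<le> m u" "k \<le> m u" "int (k - 1) = int k + - 1" using \<open>k \<in> {1..m u}\<close> by auto
  ultimately show "f (\<omega>(u := k)) \<le> f (\<omega>(u := k - 1))" by blast
next
  fix \<omega> i j assume "\<forall>\<omega>\<in>Omega I m v. \<forall>k\<in>{1..m u}. f (\<omega>(u := k)) \<le> f (\<omega>(u := k - 1))"
    "\<omega> \<in> Omega I m v" "i \<le> m u" "int j = int i + - 1"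
  moreover have "i \<in> {1..m u}" "i - 1 = j" using calculation(3,4) by auto
  ultimately show "f (\<omega>(u := i)) \<le> f (\<omega>(u := j))" by metis
qed

lemma Pconstr_sign:
  "s \<noteq> SObs \<Longrightarrow> Pconstr n I m (u, v, s) = {P \<in> params n I m. mono_in s u v (P v)}"
  by (cases s) (auto simp: Pconstr_def mono_in_SPlus_iff mono_in_SMinus_iff)

definition infl_lower :: "nat \<Rightarrow> nat \<Rightarrow> sgn \<Rightarrow> param \<Rightarrow> param" where
  "infl_lower u v s L = (\<lambda>v' \<omega>. if v' = v \<and> is_coord n I m v \<omega> then
      (if 0 \<le> int (\<omega> u) - shift s \<and> int (\<omega> u) - shift s \<le> int (m u)
       then max (L v \<omega>) (L v (\<omega>(u := nat (int (\<omega> u) - shift s)))) else L v \<omega>)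
    else L v' \<omega>)"

definition infl_upper :: "nat \<Rightarrow> nat \<Rightarrow> sgn \<Rightarrow> param \<Rightarrow> param" where
  "infl_upper u v s U = (\<lambda>v' \<omega>. if v' = v \<and> is_coord n I m v \<omega> then
      (if 0 \<le> int (\<omega> u) + shift s \<and> int (\<omega> u) + shift s \<le> int (m u)
       then min (U v \<omega>) (U v (\<omega>(u := nat (int (\<omega> u) + shift s)))) else U v \<omega>)
    else U v' \<omega>)"

lemma infl_step_Some: "infl_step n I m u v s (Some (L, U)) = mk (infl_lower u v s L) (infl_upper u v s U)"
proof -
  have max: "Max ({a} \<union> (if c then {b} else {})) = (if c then max a b else a)"
    and min: "Min ({a} \<union> (if c then {b} else {})) = (if c then min a b else a)" for a b :: nat and c
    by auto
  show ?thesis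
    unfolding infl_step_def infl_lower_def infl_upper_def by (simp only: option.case prod.case max min)
qed

lemma narrowing_infl_step: "narrowing (infl_step n I m u v s)"
  by (rule narrowing_mkI[where g="infl_step n I m u v s", OF _ infl_step_Some])
    (auto simp: infl_step_def infl_lower_def infl_upper_def le_fun_def)

lemma local_infl_step: "local_to v (infl_step n I m u v s)"
  by (rule local_toI) (auto simp: infl_step_Some mk_def infl_lower_def infl_upper_def split: if_splits)

lemma keeps_infl_step:
  assumes u: "u \<in> regs I v" and mono: "mono_in s u v (P v)"
  shows "keeps P (infl_step n I m u v s)"
proof (rule keepsI)
  fix L U assume LP: "L \<le> P" and PU: "P \<le> U"
  have "infl_lower u v s L v \<omega> \<le> P v \<omega>" if "\<omega> \<in> Omega I m v" for \<omega>
  proof -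
    let ?i = "nat (int (\<omega> u) - shift s)"
    have "L v (\<omega>(u := ?i)) \<le> P v \<omega>" if "0 \<le> int (\<omega> u) - shift s" "int (\<omega> u) - shift s \<le> int (m u)"
    proof -
      have "L v (\<omega>(u := ?i)) \<le> P v (\<omega>(u := ?i))" using LP by (rule le_funD2)
      also have "\<dots> \<le> P v (\<omega>(u := \<omega> u))"
        using mono \<open>\<omega> \<in> Omega I m v\<close> Omega_le[OF \<open>\<omega> \<in> Omega I m v\<close> u] that
        unfolding mono_in_def by (metis int_nat_eq nat_le_iff diff_add_cancel)
      finally show ?thesis by simp
    qed
    then show ?thesis using le_funD2[OF LP] by (auto simp: infl_lower_def)
  qed
  then have "infl_lower u v s L \<le> P"
    using le_funD2[OF LP] by (intro le_fun2I) (metis infl_lower_def is_coord_def)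
  moreover have "P v \<omega> \<le> infl_upper u v s U v \<omega>" if "\<omega> \<in> Omega I m v" for \<omega>
  proof -
    let ?j = "nat (int (\<omega> u) + shift s)"
    have "P v \<omega> \<le> U v (\<omega>(u := ?j))" if "0 \<le> int (\<omega> u) + shift s" "int (\<omega> u) + shift s \<le> int (m u)"
    proof -
      have "P v (\<omega>(u := \<omega> u)) \<le> P v (\<omega>(u := ?j))"
        using mono \<open>\<omega> \<in> Omega I m v\<close> Omega_le[OF \<open>\<omega> \<in> Omega I m v\<close> u] that
        unfolding mono_in_def by (metis int_nat_eq nat_le_iff)
      also have "\<dots> \<le> U v (\<omega>(u := ?j))" using PU by (rule le_funD2)
      finally show ?thesis by simp
    qed
    then show ?thesis using le_funD2[OF PU] by (auto simp: infl_upper_def)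
  qed
  then have "P \<le> infl_upper u v s U"
    using le_funD2[OF PU] by (intro le_fun2I) (metis infl_upper_def is_coord_def)
  ultimately show "lat_mem P (infl_step n I m u v s (Some (L, U)))"
    by (simp add: infl_step_Some lat_mem_mk)
qed

lemma infl_step_fixed_mono:
  assumes u: "u \<in> regs I v" and fixed: "infl_step n I m u v s (Some (L, U)) = Some (L, U)"
  shows "mono_in s u v (L v)" "mono_in s u v (U v)"
proof -
  have eqs: "infl_lower u v s L = L" "infl_upper u v s U = U"
    using fixed by (auto simp: infl_step_Some mk_def split: if_splits)
  have coord: "is_coord n I m v (\<omega>(u := k))" if "\<omega> \<in> Omega I m v" "k \<le> m u" for \<omega> k
    using Omega_upd[OF that(1) u that(2)] node_of_regulator[OF u] by (simp add: is_coord_def)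
  show "mono_in s u v (L v)" unfolding mono_in_def
  proof (intro ballI allI impI)
    fix \<omega> i j assume "\<omega> \<in> Omega I m v" "i \<le> m u" "j \<le> m u" "int j = int i + shift s"
    then show "L v (\<omega>(u := i)) \<le> L v (\<omega>(u := j))"
      using fun_cong[OF fun_cong[OF eqs(1), of v], of "\<omega>(u := j)"] coord[of \<omega> j]
      by (simp add: infl_lower_def split: if_splits)
  qed
  show "mono_in s u v (U v)" unfolding mono_in_def
  proof (intro ballI allI impI)
    fix \<omega> i j assume "\<omega> \<in> Omega I m v" "i \<le> m u" "j \<le> m u" "int j = int i + shift s"
    moreover have "nat (int i + shift s) = j" using calculation(4) by simp
    ultimately show "U v (\<omega>(u := i)) \<le> U v (\<omega>(u := j))"
      using fun_cong[OF fun_cong[OF eqs(2), of v], of "\<omega>(u := i)"] coord[of \<omega> i]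
      by (simp add: infl_upper_def split: if_splits)
  qed
qed

lemma constr_regulator: "(u, v, c) \<in> set R \<Longrightarrow> u \<in> regs I v"
  using wf_R by (auto simp: wellformed_def)

definition infl_sign :: "nat \<Rightarrow> nat \<Rightarrow> int" where
  "infl_sign v u = (if (u, v, SPlus) \<in> set R then 1 else if (u, v, SMinus) \<in> set R then -1 else 0)"

lemma infl_sign_constr: "(u, v, s) \<in> set R \<Longrightarrow> s \<noteq> SObs \<Longrightarrow> infl_sign v u = shift s"
  using wf_R by (cases s) (auto simp: infl_sign_def shift_def wellformed_def)

lemma infl_sign_nonzero:
  assumes "infl_sign v u \<noteq> 0"
  obtains s where "(u, v, s) \<in> set R" "s \<noteq> SObs" "infl_sign v u = shift s"
  using assms infl_sign_constr by (auto simp: infl_sign_def split: if_splits)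

lemma shift_square: "s \<noteq> SObs \<Longrightarrow> shift s * shift s = 1"
  by (cases s) (simp_all add: shift_def)

lemma prec_iff: "prec I R v a b \<longleftrightarrow> (\<forall>u\<in>regs I v.
    infl_sign v u * int (a u) \<le> infl_sign v u * int (b u) \<and> (infl_sign v u = 0 \<longrightarrow> a u = b u))"
  using wf_R by (auto simp: prec_def infl_sign_def wellformed_def)

lemma prec_refl: "prec I R v a a"
  by (simp add: prec_iff)

lemma prec_trans: "prec I R v a b \<Longrightarrow> prec I R v b c \<Longrightarrow> prec I R v a c"
  unfolding prec_iff by (metis order.trans)

text \<open>The potential strictly increases along the order on regulator states; it provides
  extremal elements of finite sets.\<close>

definition pot :: "nat \<Rightarrow> (nat \<Rightarrow> nat) \<Rightarrow> int" where
  "pot v \<omega> = (\<Sum>u\<in>regs I v. infl_sign v u * int (\<omega> u))"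

lemma pot_mono: "prec I R v a b \<Longrightarrow> pot v a \<le> pot v b"
  unfolding pot_def prec_iff by (rule sum_mono) blast

lemma prec_pot_eq:
  assumes "a \<in> Omega I m v" "b \<in> Omega I m v" "prec I R v a b" "pot v a = pot v b"
  shows "a = b"
proof (rule Omega_eqI[OF assms(1,2)])
  fix u assume u: "u \<in> regs I v"
  have "(\<Sum>u\<in>regs I v. infl_sign v u * int (b u) - infl_sign v u * int (a u)) = 0"
    using assms(4) by (simp add: pot_def sum_subtractf)
  moreover have "\<forall>u\<in>regs I v. 0 \<le> infl_sign v u * int (b u) - infl_sign v u * int (a u)"
    using assms(3) by (simp add: prec_iff)
  ultimately have "infl_sign v u * int (b u) = infl_sign v u * int (a u)"
    using u by (simp add: sum_nonneg_eq_0_iff[OF finite_regs])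
  then show "a u = b u" using assms(3) u by (auto simp: prec_iff)
qed

lemma pot_upd:
  assumes "u \<in> regs I v"
  shows "pot v (\<omega>(u := j)) = pot v \<omega> + infl_sign v u * (int j - int (\<omega> u))"
proof -
  have "pot v (\<omega>(u := j)) - pot v \<omega>
      = (\<Sum>w\<in>regs I v. infl_sign v w * (int ((\<omega>(u := j)) w) - int (\<omega> w)))"
    by (simp add: pot_def sum_subtractf algebra_simps)
  also have "\<dots> = infl_sign v u * (int j - int (\<omega> u))"
    using assms by (subst sum.remove[OF finite_regs assms]) (auto intro: sum.neutral)
  finally show ?thesis by simp
qed

definition sign_mono :: "nat \<Rightarrow> ((nat \<Rightarrow> nat) \<Rightarrow> nat) \<Rightarrow> bool" where
  "sign_mono v f \<longleftrightarrow> (\<forall>u s. (u, v, s) \<in> set R \<longrightarrow> s \<noteq> SObs \<longrightarrow> mono_in s u v f)"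


lemma prec_step:
  assumes a: "a \<in> Omega I m v" and b: "b \<in> Omega I m v" and ab: "prec I R v a b" "a \<noteq> b"
  obtains u s j where "(u, v, s) \<in> set R" "s \<noteq> SObs" "a u \<le> m u" "j \<le> m u"
    "int j = int (a u) + shift s" "prec I R v (a(u := j)) b" "pot v (a(u := j)) = pot v a + 1"
proof -
  obtain u where u: "u \<in> regs I v" "a u \<noteq> b u" using Omega_eqI[OF a b] ab(2) by blast
  then have "infl_sign v u \<noteq> 0" using ab(1) by (auto simp: prec_iff)
  then obtain s where s: "(u, v, s) \<in> set R" "s \<noteq> SObs" "infl_sign v u = shift s"
    by (rule infl_sign_nonzero)
  have "shift s * int (a u) \<le> shift s * int (b u)" using ab(1) u(1) s(3) by (auto simp: prec_iff)
  then have "0 \<le> int (a u) + shift s \<and> shift s * (int (a u) + shift s) \<le> shift s * int (b u)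
      \<and> int (a u) + shift s \<le> max (int (a u)) (int (b u))"
    using u(2) s(2) by (cases s) (auto simp: shift_def)
  then have close: "0 \<le> int (a u) + shift s" "shift s * (int (a u) + shift s) \<le> shift s * int (b u)"
    "int (a u) + shift s \<le> max (int (a u)) (int (b u))"
    by auto
  define j where "j = nat (int (a u) + shift s)"
  have bm: "b u \<le> m u" "a u \<le> m u" using Omega_le[OF b u(1)] Omega_le[OF a u(1)] .
  have j: "int j = int (a u) + shift s" "j \<le> m u" using close(1,3) bm by (auto simp: j_def)
  have "prec I R v (a(u := j)) b"
    unfolding prec_iff
  proof
    fix w assume "w \<in> regs I v"
    show "infl_sign v w * int ((a(u := j)) w) \<le> infl_sign v w * int (b w)
        \<and> (infl_sign v w = 0 \<longrightarrow> (a(u := j)) w = b w)"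
    proof (cases "w = u")
      case True
      then show ?thesis using close(2) s(2,3) j(1) by (simp add: shift_def split: sgn.splits)
    next
      case False
      then show ?thesis using ab(1) \<open>w \<in> regs I v\<close> by (simp add: prec_iff)
    qed
  qed
  moreover have "pot v (a(u := j)) = pot v a + 1"
    using pot_upd[OF u(1)] s(3) shift_square[OF s(2)] j(1) by simp
  ultimately show ?thesis by (rule that[OF s(1,2) bm(2) j(2,1)])
qed

lemma sign_mono_prec:
  assumes mono: "sign_mono v f" and a: "a \<in> Omega I m v" and b: "b \<in> Omega I m v"
    and ab: "prec I R v a b"
  shows "f a \<le> f b"
  using a ab
proof (induction "nat (pot v b - pot v a)" arbitrary: a rule: less_induct)
  case less
  show ?case
  proof (cases "a = b")
    case False
    then obtain u s j where us: "(u, v, s) \<in> set R" "s \<noteq> SObs"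
      and range: "a u \<le> m u" "j \<le> m u" "int j = int (a u) + shift s"
      and step: "prec I R v (a(u := j)) b" "pot v (a(u := j)) = pot v a + 1"
      using prec_step[OF less.prems(1) b less.prems(2)] by blast
    have "f (a(u := a u)) \<le> f (a(u := j))"
      using mono us range less.prems(1) unfolding sign_mono_def mono_in_def by blast
    also have "\<dots> \<le> f b"
      using less.hyps[OF _ Omega_upd[OF less.prems(1) constr_regulator[OF us(1)] range(2)] step(1)]
        step(2) pot_mono[OF step(1)] by simp
    finally show ?thesis by simp
  qed simp
qed

lemma prec_maximal_above:
  assumes "finite A" "A \<subseteq> Omega I m v" "d \<in> A"
  obtains w where "w \<in> A" "prec I R v d w" "\<forall>a\<in>A. prec I R v w a \<longrightarrow> a = w"
proof (rule finite_exists_maximal_above[where r="prec I R v" and f="pot v", OF assms(1,3) prec_refl])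
  show "\<And>a b c. prec I R v a b \<Longrightarrow> prec I R v b c \<Longrightarrow> prec I R v a c" by (rule prec_trans)
  show "\<And>a b. prec I R v a b \<Longrightarrow> pot v a \<le> pot v b" by (rule pot_mono)
  show "\<And>a b. a \<in> A \<Longrightarrow> b \<in> A \<Longrightarrow> prec I R v a b \<Longrightarrow> pot v a = pot v b \<Longrightarrow> a = b"
    using assms(2) prec_pot_eq by blast
qed (use that in blast)

lemma prec_minimal_below:
  assumes "finite A" "A \<subseteq> Omega I m v" "d \<in> A"
  obtains w where "w \<in> A" "prec I R v w d" "\<forall>a\<in>A. prec I R v a w \<longrightarrow> a = w"
proof (rule finite_exists_maximal_above[where r="\<lambda>a b. prec I R v b a" and f="\<lambda>a. - pot v a",
      OF assms(1,3) prec_refl])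
  show "\<And>a b c. prec I R v b a \<Longrightarrow> prec I R v c b \<Longrightarrow> prec I R v c a" by (rule prec_trans)
  show "\<And>a b. prec I R v b a \<Longrightarrow> - pot v a \<le> - pot v b" by (simp add: pot_mono)
  show "\<And>a b. a \<in> A \<Longrightarrow> b \<in> A \<Longrightarrow> prec I R v b a \<Longrightarrow> - pot v a = - pot v b \<Longrightarrow> a = b"
    using assms(2) prec_pot_eq by (metis neg_equal_iff_equal subsetD)
qed (use that in blast)

section \<open>Observability constraints\<close>

definition vary_set :: "nat \<Rightarrow> nat \<Rightarrow> param \<Rightarrow> param \<Rightarrow> (nat \<Rightarrow> nat) set" where
  "vary_set u v L U = {\<omega> \<in> Omega I m v. \<exists>k\<in>{1..m u}.
     L v (\<omega>(u := k)) < U v (\<omega>(u := k - 1)) \<or> U v (\<omega>(u := k)) > L v (\<omega>(u := k - 1))}"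

definition raise_set :: "nat \<Rightarrow> nat \<Rightarrow> param \<Rightarrow> param \<Rightarrow> (nat \<Rightarrow> nat) set" where
  "raise_set u v L U = {\<omega> \<in> vary_set u v L U. L v \<omega> < U v \<omega> \<and>
     (\<forall>\<omega>'\<in>vary_set u v L U. L v \<omega> = L v \<omega>' \<and> (prec I R v \<omega>' \<omega> \<or> incomp I R v \<omega> \<omega>'))}"

definition lower_set :: "nat \<Rightarrow> nat \<Rightarrow> param \<Rightarrow> param \<Rightarrow> (nat \<Rightarrow> nat) set" where
  "lower_set u v L U = {\<omega> \<in> vary_set u v L U. L v \<omega> < U v \<omega> \<and>
     (\<forall>\<omega>'\<in>vary_set u v L U. U v \<omega> = U v \<omega>' \<and> (prec I R v \<omega> \<omega>' \<or> incomp I R v \<omega> \<omega>'))}"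

definition raised_L :: "nat \<Rightarrow> nat \<Rightarrow> param \<Rightarrow> param \<Rightarrow> param" where
  "raised_L u v L U = (if \<exists>\<omega>. raise_set u v L U = {\<omega>}
     then L(v := (L v)(the_elem (raise_set u v L U) := L v (the_elem (raise_set u v L U)) + 1)) else L)"

definition lowered_U :: "nat \<Rightarrow> nat \<Rightarrow> param \<Rightarrow> param \<Rightarrow> param" where
  "lowered_U u v L U = (if \<exists>\<omega>. lower_set u v L U = {\<omega>}
     then U(v := (U v)(the_elem (lower_set u v L U) := U v (the_elem (lower_set u v L U)) - 1)) else U)"

lemma nabla_obs_Some: "nabla_obs n I m R u v (Some (L, U)) =
   (if vary_set u v L U = {} then None else mk (raised_L u v L U) (lowered_U u v L U))"
  unfolding nabla_obs_def vary_set_def raise_set_def lower_set_def raised_L_def lowered_U_def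
  by (simp only: option.case prod.case Let_def)

lemma narrowing_nabla_obs: "narrowing (nabla_obs n I m R u v)"
proof (rule narrowingI)
  fix L U :: param
  have "L \<le> raised_L u v L U" "lowered_U u v L U \<le> U"
    by (auto simp: raised_L_def lowered_U_def le_fun_def)
  then show "nabla_obs n I m R u v (Some (L, U)) = None \<or> (\<exists>L' U'. nabla_obs n I m R u v (Some (L, U))
      = Some (L', U') \<and> L' \<le> U' \<and> L \<le> L' \<and> U' \<le> U)"
    by (auto simp: nabla_obs_Some mk_def)
qed (simp add: nabla_obs_def)

lemma local_nabla_obs: "local_to v (nabla_obs n I m R u v)"
  by (rule local_toI) (auto simp: nabla_obs_Some mk_def raised_L_def lowered_U_def split: if_splits)

lemma vary_set_upd: "\<omega> \<in> vary_set u v L U \<Longrightarrow> u \<in> regs I v \<Longrightarrow> j \<le> m u \<Longrightarrow> \<omega>(u := j) \<in> vary_set u v L U"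
  unfolding vary_set_def using Omega_upd by auto

lemma finite_vary_set: "finite (vary_set u v L U)"
  using finite_Omega by (rule finite_subset[rotated]) (auto simp: vary_set_def)

text \<open>Since P varies on the vary set while the lower bound is constant there, P exceeds it at
  some point, hence (by sign monotonicity) at a maximal point above it, which must be the unique
  element of the raise set.\<close>

lemma raise_set_sound:
  assumes LP: "L \<le> P" and PU: "P \<le> U" and mono: "sign_mono v (P v)"
    and varies: "\<exists>a\<in>vary_set u v L U. \<exists>b\<in>vary_set u v L U. P v a \<noteq> P v b"
    and w: "raise_set u v L U = {w}"
  shows "L v w < P v w"
proof -
  let ?A = "vary_set u v L U"
  have A: "finite ?A" "?A \<subseteq> Omega I m v" using finite_vary_set by (auto simp: vary_set_def)
  have "w \<in> raise_set u v L U" using w by simp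
  then have Lw: "\<And>\<omega>'. \<omega>' \<in> ?A \<Longrightarrow> L v \<omega>' = L v w" by (auto simp: raise_set_def)
  obtain a b where ab: "a \<in> ?A" "b \<in> ?A" "P v a \<noteq> P v b" using varies by blast
  then have "L v w < P v a \<or> L v w < P v b"
    using Lw[OF ab(1)] Lw[OF ab(2)] le_funD2[OF LP, of v a] le_funD2[OF LP, of v b] by linarith
  then obtain d where d: "d \<in> ?A" "L v w < P v d" using ab(1,2) by blast
  obtain w' where w': "w' \<in> ?A" "prec I R v d w'" and max: "\<forall>a\<in>?A. prec I R v w' a \<longrightarrow> a = w'"
    using prec_maximal_above[OF A d(1)] .
  have "P v d \<le> P v w'" using sign_mono_prec[OF mono] A(2) d(1) w' by blast
  then have Pw': "L v w < P v w'" using d(2) by simp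
  have "prec I R v \<omega>' w' \<or> incomp I R v w' \<omega>'" if "\<omega>' \<in> ?A" for \<omega>'
    using max that prec_refl[of v w'] by (auto simp: incomp_def)
  moreover have "L v w' < U v w'" using Pw' Lw[OF w'(1)] le_funD2[OF PU, of v w'] by simp
  ultimately have "w' \<in> raise_set u v L U" using w'(1) Lw unfolding raise_set_def by auto
  then show ?thesis using w Pw' by simp
qed

lemma lower_set_sound:
  assumes LP: "L \<le> P" and PU: "P \<le> U" and mono: "sign_mono v (P v)"
    and varies: "\<exists>a\<in>vary_set u v L U. \<exists>b\<in>vary_set u v L U. P v a \<noteq> P v b"
    and w: "lower_set u v L U = {w}"
  shows "P v w < U v w"
proof -
  let ?A = "vary_set u v L U"
  have A: "finite ?A" "?A \<subseteq> Omega I m v" using finite_vary_set by (auto simp: vary_set_def)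
  have "w \<in> lower_set u v L U" using w by simp
  then have Uw: "\<And>\<omega>'. \<omega>' \<in> ?A \<Longrightarrow> U v \<omega>' = U v w" by (auto simp: lower_set_def)
  obtain a b where ab: "a \<in> ?A" "b \<in> ?A" "P v a \<noteq> P v b" using varies by blast
  then have "P v a < U v w \<or> P v b < U v w"
    using Uw[OF ab(1)] Uw[OF ab(2)] le_funD2[OF PU, of v a] le_funD2[OF PU, of v b] by linarith
  then obtain d where d: "d \<in> ?A" "P v d < U v w" using ab(1,2) by blast
  obtain w' where w': "w' \<in> ?A" "prec I R v w' d" and min: "\<forall>a\<in>?A. prec I R v a w' \<longrightarrow> a = w'"
    using prec_minimal_below[OF A d(1)] .
  have "P v w' \<le> P v d" using sign_mono_prec[OF mono] A(2) d(1) w' by blast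
  then have Pw': "P v w' < U v w" using d(2) by simp
  have "prec I R v w' \<omega>' \<or> incomp I R v w' \<omega>'" if "\<omega>' \<in> ?A" for \<omega>'
    using min that prec_refl[of v w'] by (auto simp: incomp_def)
  moreover have "L v w' < U v w'" using Pw' Uw[OF w'(1)] le_funD2[OF LP, of v w'] by simp
  ultimately have "w' \<in> lower_set u v L U" using w'(1) Uw unfolding lower_set_def by auto
  then show ?thesis using w Pw' by simp
qed

lemma vary_set_witness:
  assumes P: "P \<in> Pconstr n I m (u, v, SObs)" and u: "u \<in> regs I v" and LP: "L \<le> P" and PU: "P \<le> U"
  shows "\<exists>a\<in>vary_set u v L U. \<exists>b\<in>vary_set u v L U. P v a \<noteq> P v b"
proof -
  obtain \<omega> k where \<omega>: "\<omega> \<in> Omega I m v" "k \<in> {1..m u}" "P v (\<omega>(u := k)) \<noteq> P v (\<omega>(u := k - 1))"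
    using P by (auto simp: Pconstr_def)
  have "L v (\<omega>(u := k)) < U v (\<omega>(u := k - 1)) \<or> U v (\<omega>(u := k)) > L v (\<omega>(u := k - 1))"
    using \<omega>(3) le_funD2[OF LP, of v "\<omega>(u := k)"] le_funD2[OF PU, of v "\<omega>(u := k - 1)"]
      le_funD2[OF LP, of v "\<omega>(u := k - 1)"] le_funD2[OF PU, of v "\<omega>(u := k)"] by linarith
  then have "\<omega> \<in> vary_set u v L U" using \<omega>(1,2) unfolding vary_set_def by blast
  then have "\<omega>(u := k) \<in> vary_set u v L U" "\<omega>(u := k - 1) \<in> vary_set u v L U"
    using vary_set_upd[OF _ u] \<omega>(2) by auto
  then show ?thesis using \<omega>(3) by blast
qed

lemma keeps_nabla_obs:
  assumes P: "P \<in> Pconstr n I m (u, v, SObs)" and mono: "sign_mono v (P v)" and u: "u \<in> regs I v"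
  shows "keeps P (nabla_obs n I m R u v)"
proof (rule keepsI)
  fix L U assume LP: "L \<le> P" and PU: "P \<le> U"
  have varies: "\<exists>a\<in>vary_set u v L U. \<exists>b\<in>vary_set u v L U. P v a \<noteq> P v b"
    using vary_set_witness[OF P u LP PU] .
  have "raised_L u v L U \<le> P"
  proof (cases "\<exists>w. raise_set u v L U = {w}")
    case True
    then obtain w where w: "raise_set u v L U = {w}" ..
    have "raised_L u v L U = L(v := (L v)(w := L v w + 1))" by (simp add: raised_L_def w)
    then show ?thesis
      using raise_set_sound[OF LP PU mono varies w] LP by (auto simp: le_fun_def)
  qed (simp add: raised_L_def LP)
  moreover have "P \<le> lowered_U u v L U"
  proof (cases "\<exists>w. lower_set u v L U = {w}")
    case True
    then obtain w where w: "lower_set u v L U = {w}" ..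
    have "lowered_U u v L U = U(v := (U v)(w := U v w - 1))" by (simp add: lowered_U_def w)
    then show ?thesis
      using lower_set_sound[OF LP PU mono varies w] PU by (auto simp: le_fun_def)
  qed (simp add: lowered_U_def PU)
  ultimately show "lat_mem P (nabla_obs n I m R u v (Some (L, U)))"
    using varies by (auto simp: nabla_obs_Some lat_mem_mk)
qed

lemma nabla_r_eq:
  "nabla_r n I m R (u, v, SObs) = nabla_obs n I m R u v"
  "s \<noteq> SObs \<Longrightarrow> nabla_r n I m R (u, v, s) = fixp (infl_step n I m u v s)"
  by (cases s; simp add: nabla_r_def)+

lemma narrowing_nabla_r: "narrowing (nabla_r n I m R (u, v, c))"
  by (cases "c = SObs") (simp_all add: nabla_r_eq narrowing_nabla_obs narrowing_fixp narrowing_infl_step)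

lemma local_nabla_r: "local_to v (nabla_r n I m R (u, v, c))"
  by (cases "c = SObs")
    (simp_all add: nabla_r_eq local_nabla_obs local_to_fixp narrowing_infl_step local_infl_step)

definition admissible :: "param \<Rightarrow> bool" where
  "admissible P \<longleftrightarrow> P \<in> params n I m \<and> (\<forall>r\<in>set R. P \<in> Pconstr n I m r)"

lemma admissible_sign_mono: "admissible P \<Longrightarrow> sign_mono v (P v)"
  by (auto simp: admissible_def sign_mono_def Pconstr_sign)

lemma keeps_nabla_r:
  assumes "admissible P" "(u, v, c) \<in> set R"
  shows "keeps P (nabla_r n I m R (u, v, c))"
proof -
  have u: "u \<in> regs I v" using constr_regulator assms(2) .
  have P: "P \<in> Pconstr n I m (u, v, c)" using assms by (simp add: admissible_def)
  show ?thesis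
  proof (cases "c = SObs")
    case True
    then show ?thesis using keeps_nabla_obs P u admissible_sign_mono[OF assms(1)] by (simp add: nabla_r_eq)
  next
    case False
    then show ?thesis using keeps_fixp keeps_infl_step u P by (simp add: nabla_r_eq Pconstr_sign)
  qed
qed

definition constr_holds :: "constr \<Rightarrow> param \<Rightarrow> param \<Rightarrow> bool" where
  "constr_holds r L U = (case r of (u, v, c) \<Rightarrow>
     if c = SObs then vary_set u v L U \<noteq> {} else mono_in c u v (L v) \<and> mono_in c u v (U v))"

lemma constr_holds_local:
  "L' v = L v \<Longrightarrow> U' v = U v \<Longrightarrow> constr_holds (u, v, c) L' U' = constr_holds (u, v, c) L U"
  by (simp add: constr_holds_def vary_set_def)

lemma nabla_r_fixed:
  assumes r: "(u, v, c) \<in> set R" and wf: "wf_lat (Some (L, U))"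
    and fixed: "nabla_r n I m R (u, v, c) (Some (L, U)) = Some (L, U)"
  shows "constr_holds (u, v, c) L U"
proof (cases "c = SObs")
  case True
  then show ?thesis using fixed by (auto simp: constr_holds_def nabla_r_eq nabla_obs_Some split: if_splits)
next
  case False
  have "infl_step n I m u v c (Some (L, U)) = Some (L, U)"
    using fixed fixp_fixed[OF narrowing_infl_step[of u v c] wf] False by (simp add: nabla_r_eq)
  then show ?thesis
    using infl_step_fixed_mono[OF constr_regulator[OF r]] False by (simp add: constr_holds_def)
qed

lemma fold_comp_closed:
  assumes "\<And>r. r \<in> set rs \<Longrightarrow> Q (g r)" "Q h" "\<And>f f'. Q f \<Longrightarrow> Q f' \<Longrightarrow> Q (f \<circ> f')"
  shows "Q (fold (\<lambda>r f. g r \<circ> f) rs h)"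
  using assms by (induction rs arbitrary: h) auto

text \<open>Each factor can only shrink y, and the composite brings it back.\<close>

lemma fold_comp_fixed:
  assumes "\<forall>r\<in>set rs. narrowing (g r)" "narrowing h" "wf_lat y" "fold (\<lambda>r f. g r \<circ> f) rs h y = y"
  shows "h y = y \<and> (\<forall>r\<in>set rs. g r y = y)"
  using assms
proof (induction rs arbitrary: h)
  case (Cons r rs)
  have gr: "narrowing (g r)" using Cons.prems(1) by simp
  then have IH: "g r (h y) = y \<and> (\<forall>r'\<in>set rs. g r' y = y)"
    using Cons.IH[of "g r \<circ> h"] Cons.prems narrowing_comp[OF gr Cons.prems(2)] by (simp add: comp_def)
  have "wf_lat (h y)" "lat_le (h y) y" using narrowingD[OF Cons.prems(2,3)] by auto
  moreover from this have "lat_le y (h y)" using narrowingD(2)[OF gr] IH by metis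
  ultimately have "h y = y" using lat_le_antisym by blast
  then show ?case using IH by simp
qed simp

abbreviation nabla_round :: "constr list \<Rightarrow> lat \<Rightarrow> lat" where
  "nabla_round R' \<equiv> fold (\<lambda>r f. nabla_r n I m R r \<circ> f) R' id"

lemma narrowing_nabla_round: "narrowing (nabla_round R')"
  by (rule fold_comp_closed[where Q=narrowing])
    (auto simp: narrowing_nabla_r narrowing_id narrowing_comp)

lemma narrowing_nabla_set: "narrowing (nabla_set n I m R R')"
  by (simp add: nabla_set_def narrowing_fixp narrowing_nabla_round)

lemma local_nabla_set:
  assumes "\<forall>(u, v', c)\<in>set R'. v' = v"
  shows "local_to v (nabla_set n I m R R')"
proof -
  have "narrowing (nabla_round R') \<and> local_to v (nabla_round R')"
  proof (rule fold_comp_closed[where Q="\<lambda>f. narrowing f \<and> local_to v f"])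
    fix r assume "r \<in> set R'"
    then obtain u c where "r = (u, v, c)" using assms by (cases r) auto
    then show "narrowing (nabla_r n I m R r) \<and> local_to v (nabla_r n I m R r)"
      by (simp add: narrowing_nabla_r local_nabla_r)
  qed (auto simp: narrowing_id narrowing_comp local_to_comp local_to_id)
  then show ?thesis by (simp add: nabla_set_def local_to_fixp)
qed

lemma keeps_nabla_set:
  assumes "admissible P" "set R' \<subseteq> set R"
  shows "keeps P (nabla_set n I m R R')"
proof -
  have "keeps P (nabla_round R')"
    by (rule fold_comp_closed[where Q="keeps P"])
      (use assms keeps_nabla_r in \<open>auto simp: keeps_comp keeps_def\<close>)
  then show ?thesis by (simp add: nabla_set_def keeps_fixp)
qed

lemma nabla_set_fixed:
  assumes "wf_lat x" "r \<in> set R'"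
  shows "nabla_r n I m R r (nabla_set n I m R R' x) = nabla_set n I m R R' x"
proof -
  have "nabla_round R' (nabla_set n I m R R' x) = nabla_set n I m R R' x"
    unfolding nabla_set_def by (rule fixp_fixed[OF narrowing_nabla_round assms(1)])
  moreover have "wf_lat (nabla_set n I m R R' x)" using narrowing_nabla_set assms(1) by (rule narrowingD)
  ultimately show ?thesis
    using fold_comp_fixed[of R' "nabla_r n I m R" id] narrowing_nabla_r narrowing_id assms(2)
    by (metis surj_pair)
qed

definition psharp_step :: "trans \<Rightarrow> lat \<Rightarrow> lat" where
  "psharp_step t lt = nabla_set n I m R (filter (\<lambda>(u, v', c). v' = tnode t) R) (nabla_t n I m t lt)"

lemma psharp_fold: "psharp n I m R \<pi> = fold psharp_step (remdups \<pi>) (nabla_set n I m R R (Some (pbot, ptop n I m)))"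
  by (simp add: psharp_def psharp_step_def[abs_def])

lemma wf_lat_init: "wf_lat (Some (pbot, ptop n I m))"
  by (simp add: wf_lat_def pbot_def le_fun_def)

lemma pR_iff: "P \<in> pR n I m R T \<longleftrightarrow> admissible P \<and> (\<forall>t\<in>T. P \<in> Ptrans n I m t)"
  by (auto simp: pR_def pT_def admissible_def)

section \<open>Soundness\<close>

lemma keeps_psharp_step: "admissible P \<Longrightarrow> P \<in> Ptrans n I m t \<Longrightarrow> keeps P (psharp_step t)"
  using keeps_nabla_set[of P] keeps_nabla_t unfolding keeps_def psharp_step_def by fastforce

lemma psharp_not_None:
  assumes "P \<in> pR n I m R (set \<pi>)"
  shows "psharp n I m R \<pi> \<noteq> None"
proof -
  have P: "admissible P" "\<forall>t\<in>set \<pi>. P \<in> Ptrans n I m t" using assms by (simp_all add: pR_iff)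
  have "lat_mem P (Some (pbot, ptop n I m))"
    using P(1) params_le_ptop by (auto simp: lat_mem_def admissible_def pbot_def le_fun_def)
  then have "lat_mem P (nabla_set n I m R R (Some (pbot, ptop n I m)))"
    using keeps_nabla_set[OF P(1)] by (simp add: keeps_def)
  moreover have "lat_mem P (fold psharp_step ts y)" if "set ts \<subseteq> set \<pi>" "lat_mem P y" for ts y
    using that
  proof (induction ts arbitrary: y)
    case (Cons t ts)
    then have "lat_mem P (psharp_step t y)" using keeps_psharp_step[OF P(1)] P(2) by (simp add: keeps_def)
    then show ?case using Cons by simp
  qed simp
  ultimately have "lat_mem P (psharp n I m R \<pi>)" by (simp add: psharp_fold)
  then show ?thesis by (auto simp: lat_mem_def)
qed

section \<open>Completeness\<close>

definition psharp_inv :: "trans set \<Rightarrow> lat \<Rightarrow> bool" where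
  "psharp_inv T y \<longleftrightarrow> wf_lat y \<and> (\<forall>L U. y = Some (L, U) \<longrightarrow>
     (\<forall>t\<in>T. trans_bound t L U) \<and> (\<forall>r\<in>set R. constr_holds r L U))"

lemma psharp_inv_init: "psharp_inv {} (nabla_set n I m R R (Some (pbot, ptop n I m)))"
proof -
  let ?y = "nabla_set n I m R R (Some (pbot, ptop n I m))"
  have wf: "wf_lat ?y" using narrowing_nabla_set wf_lat_init by (rule narrowingD)
  have "constr_holds r L U" if "?y = Some (L, U)" "r \<in> set R" for L U r
    using nabla_r_fixed nabla_set_fixed[OF wf_lat_init that(2)] that wf by (cases r) simp
  then show ?thesis using wf by (simp add: psharp_inv_def)
qed

text \<open>Constraints on the node changed by t hold because the step ends with a fixpoint of their
  narrowings; all other constraints are untouched since every narrowing involved is local to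
  that node.\<close>

lemma psharp_inv_step:
  assumes inv: "psharp_inv T y" shows "psharp_inv (insert t T) (psharp_step t y)"
proof -
  let ?Rt = "filter (\<lambda>(u, v', c). v' = tnode t) R"
  let ?z = "nabla_t n I m t y"
  have wf_y: "wf_lat y" using inv by (simp add: psharp_inv_def)
  have wf_z: "wf_lat ?z" and le_z: "lat_le ?z y" using narrowingD[OF narrowing_nabla_t wf_y] by auto
  have wf_y': "wf_lat (psharp_step t y)" and le_y': "lat_le (psharp_step t y) ?z"
    using narrowingD[OF narrowing_nabla_set wf_z] by (auto simp: psharp_step_def)
  have local: "local_to (tnode t) (psharp_step t)"
    unfolding psharp_step_def[abs_def]
    using local_to_comp[OF narrowing_nabla_t narrowing_nabla_set local_nabla_set local_nabla_t]
    by (auto simp: comp_def)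
  have "(\<forall>t'\<in>insert t T. trans_bound t' L' U') \<and> (\<forall>r\<in>set R. constr_holds r L' U')"
    if y': "psharp_step t y = Some (L', U')" for L' U'
  proof -
    obtain L1 U1 where z: "?z = Some (L1, U1)" and le1: "L1 \<le> L'" "U' \<le> U1"
      using le_y' y' by (auto elim: lat_le_SomeE)
    obtain L U where y: "y = Some (L, U)" and le: "L \<le> L1" "U1 \<le> U"
      using le_z z by (auto elim: lat_le_SomeE)
    have old: "\<forall>t\<in>T. trans_bound t L U" "\<forall>r\<in>set R. constr_holds r L U"
      using inv y by (simp_all add: psharp_inv_def)
    have "trans_bound t L' U'" using trans_bound_nabla_t[OF z] le1 by (rule trans_bound_mono)
    moreover have "trans_bound t' L' U'" if "t' \<in> T" for t'
      using old(1) that le le1 by (blast intro: trans_bound_mono order_trans)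
    moreover have "constr_holds (u, v, c) L' U'" if r: "(u, v, c) \<in> set R" for u v c
    proof (cases "v = tnode t")
      case True
      then have "nabla_r n I m R (u, v, c) (psharp_step t y) = psharp_step t y"
        using nabla_set_fixed[OF wf_z] r by (simp add: psharp_step_def)
      then show ?thesis using nabla_r_fixed[OF r] wf_y' y' by simp
    next
      case False
      then have "L' v = L v" "U' v = U v"
        using local wf_y y y' by (auto simp: local_to_def agree_off_def)
      then show ?thesis using old(2) r constr_holds_local by metis
    qed
    ultimately show ?thesis by auto
  qed
  then show ?thesis using wf_y' by (simp add: psharp_inv_def)
qed

lemma psharp_inv_psharp: "psharp_inv (set \<pi>) (psharp n I m R \<pi>)"
proof -
  have "psharp_inv (T \<union> set ts) (fold psharp_step ts y)" if "psharp_inv T y" for T ts y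
    using that
  proof (induction ts arbitrary: T y)
    case (Cons t ts)
    from Cons.IH[OF psharp_inv_step[OF Cons.prems]] show ?case by simp
  qed simp
  from this[OF psharp_inv_init, of "remdups \<pi>"] show ?thesis by (simp add: psharp_fold)
qed

definition flat_in :: "nat \<Rightarrow> nat \<Rightarrow> ((nat \<Rightarrow> nat) \<Rightarrow> nat) \<Rightarrow> bool" where
  "flat_in u v f \<longleftrightarrow> (\<forall>\<omega>\<in>Omega I m v. \<forall>k\<in>{1..m u}. f (\<omega>(u := k)) = f (\<omega>(u := k - 1)))"

lemma Pconstr_obs: "Pconstr n I m (u, v, SObs) = {P \<in> params n I m. \<not> flat_in u v (P v)}"
  by (auto simp: Pconstr_def flat_in_def)

lemma flat_in_upd:
  assumes "flat_in u v f" "\<omega> \<in> Omega I m v" "j \<le> m u"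
  shows "f (\<omega>(u := j)) = f (\<omega>(u := 0))"
  using assms(3)
proof (induction j)
  case (Suc j)
  have "f (\<omega>(u := Suc j)) = f (\<omega>(u := j))" using assms(1,2) Suc.prems by (auto simp: flat_in_def)
  also have "\<dots> = f (\<omega>(u := 0))" using Suc.prems by (intro Suc.IH) simp
  finally show ?case .
qed simp

lemma flat_in_eq:
  assumes "flat_in u v f" "\<omega> \<in> Omega I m v" "u \<in> regs I v" "j \<le> m u"
  shows "f (\<omega>(u := j)) = f \<omega>"
  using flat_in_upd[OF assms(1,2,4)] flat_in_upd[OF assms(1,2) Omega_le[OF assms(2,3)]] by simp

lemma other_level:
  assumes "1 \<le> m u"
  obtains j where "j \<le> m u" "j \<noteq> \<omega> u"
  using assms that[of "if \<omega> u = 0 then 1 else 0"] by auto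

text \<open>Otherwise, walking around a square in the coordinates u and u' that avoids the changed
  point x would identify the old and the new value at x.\<close>

lemma point_update_not_flat:
  assumes flat: "flat_in u' v f" and x: "x \<in> Omega I m v"
    and u: "u \<in> regs I v" "1 \<le> m u" and u': "u' \<in> regs I v" "1 \<le> m u'" and c: "c \<noteq> f x"
  shows "\<not> flat_in u v (f(x := c))"
proof
  let ?g = "f(x := c)"
  assume flat_g: "flat_in u v ?g"
  obtain j where j: "j \<le> m u" "j \<noteq> x u" using other_level[OF u(2)] .
  let ?z = "x(u := j)"
  have z: "?z \<in> Omega I m v" "?z \<noteq> x" using Omega_upd[OF x u(1) j(1)] j(2) by (auto simp: fun_eq_iff)
  have "c = ?g ?z" using flat_in_eq[OF flat_g x u(1) j(1)] by simp
  also have "\<dots> = f ?z" using z(2) by simp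
  finally have c_fz: "c = f ?z" .
  show False
  proof (cases "u = u'")
    case True
    then show False using c c_fz flat_in_eq[OF flat x u'(1) j(1)[unfolded True]] by simp
  next
    case False
    obtain i where i: "i \<le> m u'" "i \<noteq> x u'" using other_level[OF u'(2)] .
    let ?y = "x(u' := i)"
    have y: "?y \<in> Omega I m v" "?y \<noteq> x" using Omega_upd[OF x u'(1) i(1)] i(2) by (auto simp: fun_eq_iff)
    have zy: "?z(u' := i) = ?y(u := j)" "?y(u := j) \<noteq> x" using False i(2) by (auto simp: fun_upd_twist fun_eq_iff)
    have "f ?z = f (?z(u' := i))" using flat_in_eq[OF flat z(1) u'(1) i(1)] by simp
    also have "\<dots> = ?g (?y(u := j))" using zy by simp
    also have "\<dots> = ?g ?y" using flat_in_eq[OF flat_g y(1) u(1) j(1)] .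
    also have "\<dots> = f x" using y(2) flat_in_eq[OF flat x u'(1) i(1)] by simp
    finally show False using c c_fz by simp
  qed
qed

end

text \<open>A box satisfying all constraint bounds contains an admissible parametrisation: start from
  the lower bound L and, at every node where L is flat along an observed regulator, lift L to U
  at a slack point of maximal potential. Maximality preserves the sign constraints, and
  point_update_not_flat gives the observability constraints.\<close>

locale constrained_box = regulatory_network +
  fixes L U :: param
  assumes L_le_U: "L \<le> U" and U_le_ptop: "U \<le> ptop n I m"
    and constrs: "\<forall>r\<in>set R. constr_holds r L U"
begin

definition slack :: "nat \<Rightarrow> (nat \<Rightarrow> nat) set" where
  "slack v = {\<omega> \<in> Omega I m v. L v \<omega> < U v \<omega>}"

definition needs_lift :: "nat \<Rightarrow> bool" where
  "needs_lift v \<longleftrightarrow> (\<exists>u. (u, v, SObs) \<in> set R \<and> flat_in u v (L v))"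

definition lift_point :: "nat \<Rightarrow> nat \<Rightarrow> nat" where
  "lift_point v = (SOME x. x \<in> slack v \<and> (\<forall>y\<in>slack v. pot v y \<le> pot v x))"

definition witness :: param where
  "witness = (\<lambda>v. if needs_lift v then (L v)(lift_point v := U v (lift_point v)) else L v)"

lemma obs_levels: "(u, v, SObs) \<in> set R \<Longrightarrow> 1 \<le> m u"
  using constrs by (fastforce simp: constr_holds_def vary_set_def)

lemma slack_nonempty:
  assumes r: "(u, v, SObs) \<in> set R" and flat: "flat_in u v (L v)"
  shows "slack v \<noteq> {}"
proof -
  have u: "u \<in> regs I v" using constr_regulator[OF r] .
  obtain \<omega> k where \<omega>: "\<omega> \<in> Omega I m v" "k \<in> {1..m u}"
    "L v (\<omega>(u := k)) < U v (\<omega>(u := k - 1)) \<or> U v (\<omega>(u := k)) > L v (\<omega>(u := k - 1))"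
    using constrs r by (fastforce simp: constr_holds_def vary_set_def)
  have "L v (\<omega>(u := k)) = L v (\<omega>(u := k - 1))" using flat \<omega>(1,2) by (simp add: flat_in_def)
  moreover have "\<omega>(u := k) \<in> Omega I m v" "\<omega>(u := k - 1) \<in> Omega I m v"
    using Omega_upd[OF \<omega>(1) u] \<omega>(2) by auto
  ultimately show ?thesis using \<omega>(3) by (auto simp: slack_def)
qed

lemma lift_point_max:
  assumes "needs_lift v"
  shows "lift_point v \<in> slack v" "\<forall>y\<in>slack v. pot v y \<le> pot v (lift_point v)"
proof -
  have ne: "slack v \<noteq> {}" using assms slack_nonempty by (auto simp: needs_lift_def)
  have fin: "finite (slack v)" using finite_Omega by (rule finite_subset[rotated]) (auto simp: slack_def)
  have "Max (pot v ` slack v) \<in> pot v ` slack v" using fin ne by (intro Max_in) auto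
  then obtain x where "x \<in> slack v" "Max (pot v ` slack v) = pot v x" by blast
  then have "\<exists>x. x \<in> slack v \<and> (\<forall>y\<in>slack v. pot v y \<le> pot v x)" using fin by (metis Max_ge finite_imageI imageI)
  then have "lift_point v \<in> slack v \<and> (\<forall>y\<in>slack v. pot v y \<le> pot v (lift_point v))"
    unfolding lift_point_def by (rule someI_ex)
  then show "lift_point v \<in> slack v" "\<forall>y\<in>slack v. pot v y \<le> pot v (lift_point v)" by auto
qed

lemma L_le_witness: "L \<le> witness"
  using L_le_U by (auto simp: witness_def le_fun_def)

lemma witness_le_U: "witness \<le> U"
  using L_le_U by (auto simp: witness_def le_fun_def)

lemma witness_params: "witness \<in> params n I m"
  using le_ptop_params order_trans[OF witness_le_U U_le_ptop] .

lemma witness_sign: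
  assumes r: "(u, v, s) \<in> set R" and s: "s \<noteq> SObs"
  shows "mono_in s u v (witness v)"
  unfolding mono_in_def
proof (intro ballI allI impI)
  fix \<omega> i j assume \<omega>: "\<omega> \<in> Omega I m v" and ij: "i \<le> m u" "j \<le> m u" "int j = int i + shift s"
  let ?a = "\<omega>(u := i)" and ?b = "\<omega>(u := j)"
  have u: "u \<in> regs I v" using constr_regulator[OF r] .
  have mono: "L v ?a \<le> L v ?b" "U v ?a \<le> U v ?b"
    using constrs r s \<omega> ij by (auto simp: constr_holds_def mono_in_def)
  have bO: "?b \<in> Omega I m v" using Omega_upd[OF \<omega> u ij(2)] .
  have "pot v ?b = pot v ?a + 1"
    using pot_upd[OF u, of \<omega> j] pot_upd[OF u, of \<omega> i] infl_sign_constr[OF r s] shift_square[OF s] ij(3)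
    by (simp add: algebra_simps)
  then have lift_not_b: "needs_lift v \<Longrightarrow> lift_point v = ?a \<Longrightarrow> U v ?b \<le> L v ?b"
    using lift_point_max(2)[of v] bO by (fastforce simp: slack_def)
  have "?a \<noteq> ?b" using ij(3) s by (cases s) (auto simp: fun_eq_iff shift_def)
  then show "witness v ?a \<le> witness v ?b"
    using mono lift_not_b le_funD2[OF L_le_U, of v ?b] by (auto simp: witness_def)
qed

lemma witness_obs:
  assumes r: "(u, v, SObs) \<in> set R"
  shows "\<not> flat_in u v (witness v)"
proof (cases "needs_lift v")
  case False
  then show ?thesis using r by (auto simp: witness_def needs_lift_def)
next
  case True
  then obtain u' where r': "(u', v, SObs) \<in> set R" and flat: "flat_in u' v (L v)"
    by (auto simp: needs_lift_def)
  have "lift_point v \<in> slack v" using lift_point_max(1)[OF True] .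
  then show ?thesis
    using point_update_not_flat[OF flat _ constr_regulator[OF r] obs_levels[OF r]
        constr_regulator[OF r'] obs_levels[OF r']] True
    by (auto simp: witness_def slack_def)
qed

lemma witness_pR: "\<forall>t\<in>T. trans_bound t L U \<Longrightarrow> witness \<in> pR n I m R T"
proof -
  assume T: "\<forall>t\<in>T. trans_bound t L U"
  have "witness \<in> Pconstr n I m (u, v, c)" if "(u, v, c) \<in> set R" for u v c
    using that witness_params witness_sign witness_obs
    by (cases "c = SObs") (auto simp: Pconstr_sign Pconstr_obs)
  then have "admissible witness" using witness_params by (auto simp: admissible_def)
  moreover have "witness \<in> Ptrans n I m t" if "t \<in> T" for t
    using trans_bound_Ptrans[OF witness_params] T that L_le_witness witness_le_U by blast
  ultimately show ?thesis by (simp add: pR_iff)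
qed

end

theorem corollary2:
  fixes n :: nat and I :: "(nat \<times> nat) set" and m :: "nat \<Rightarrow> nat"
    and R :: "constr list" and \<pi> :: "trans list"
  assumes "I \<subseteq> {1..n} \<times> {1..n}"
    and "wellformed I R"
    and "\<forall>t\<in>set \<pi>. is_trans n m t"
  shows "psharp n I m R \<pi> \<noteq> None \<longleftrightarrow> pR n I m R (set \<pi>) \<noteq> {}"
proof
  interpret regulatory_network n I m R using assms(1,2) by unfold_locales
  assume "psharp n I m R \<pi> \<noteq> None"
  then obtain L U where "psharp n I m R \<pi> = Some (L, U)" by auto
  then have inv: "psharp_inv (set \<pi>) (Some (L, U))" using psharp_inv_psharp[of \<pi>] by simp
  then interpret constrained_box n I m R L U
    by unfold_locales (auto simp: psharp_inv_def wf_lat_def)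
  show "pR n I m R (set \<pi>) \<noteq> {}"
    using witness_pR inv by (auto simp: psharp_inv_def)
next
  interpret regulatory_network n I m R using assms(1,2) by unfold_locales
  assume "pR n I m R (set \<pi>) \<noteq> {}"
  then show "psharp n I m R \<pi> \<noteq> None" using psharp_not_None by blast
qed

end
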